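(* Let $\mathcal{W}=(A,\to,\mathbb{S},\mathsf{f}_{\mathtt{NF}},\mathsf{Aggr})$ be a wARS. Then $\mathcal{W}$ is bounded if all of the following hold: (1) the sARS $(A,\to)$ is terminating, finitely non-deterministic, and finitely branching; (2) the semiring $\mathbb{S}$ has the extremal property; (3) $\mathsf{f}_{\mathtt{NF}}(a)\neq\top$ for all $a\in\mathtt{NF}_\to$; and (4) all aggregators $\mathsf{Aggr}_{a\to B}$ are finite aggregators that do not use $\top$ as a constant.
   Context: A semiring $\mathbb{S}=(S,\oplus,\odot,\mathbf{0},\mathbf{1})$: $(S,\oplus,\mathbf{0})$ commutative monoid, $(S,\odot,\mathbf{1})$ monoid, $\odot$ distributes over $\oplus$, $\mathbf{0}$ annihilator. Natural order: $s\preccurlyeq t$ iff $s\oplus u=t$ for some $u$. A complete lattice semiring is one where $\preccurlyeq$ is antisymmetric and every subset $T\subseteq S$ has a least upper bound $\bigsqcup T$; $\top=\bigsqcup S$. Infinite sums/products of a sequence are the suprema of the finite partial sums/products. A function $f:S^n\to S$ ($n\in\mathbb{N}$) has the extremal property if $f(e_1,\dots,e_n)\neq\top$ whenever $e_1,\dots,e_n\in S\setminus\{\top\}$; the semiring has the extremal property if $\oplus$ and $\odot$ do. $\mathrm{Seq}(X)$: non-empty finite or infinite sequences over $X$. An sARS is $(A,\to)$ with $\to\subseteq A\times\mathrm{Seq}(A)$; $\mathtt{NF}_\to$ is the set of $a$ with no $B$ such that $a\to B$. It is finitely non-deterministic if each $a$ has only finitely many $B$ with $a\to B$, and finitely branching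 if $B$ is finite whenever $a\to B$. An $(A,\to)$-reduction tree (RT) is a labeled ordered tree (possibly of infinite depth) whose nodes $v$ carry labels $a_v\in A$ and whose ordered child sequence $vE$ is either empty or satisfies $a_v\to[a_w\mid w\in vE]$; $(A,\to)$ is terminating if all RTs have finite depth. Aggregators: smallest set containing constants $s\in S$, variables $v_1,v_2,\dots$, and $\bigoplus F$, $\bigodot F$ for non-empty finite or infinite sequences $F$ of aggregators; an aggregator is finite if it is constructed only from finite sequences $F$. Aggregators induce functions by substituting the $i$-th argument for $v_i$. A wARS $(A,\to,\mathbb{S},\mathsf{f}_{\mathtt{NF}},\mathsf{Aggr})$ consists of an sARS, a complete lattice semiring $\mathbb{S}$, a map $\mathsf{f}_{\mathtt{NF}}:\mathtt{NF}_\to\to S$, and for each $a\to B$ an aggregator $\mathsf{Aggr}_{a\to B}$ with variable indices $\le|B|$, viewed as a function $S^{|B|}\to S$. Weight of a finite-depth RT $\mathfrak{T}$ at node $v$: $\mathsf{f}_{\mathtt{NF}}(a_v)$ if $a_v\in\mathtt{NF}_\to$; $\mathbf{0}$ if $v$ is a leaf with $a_v\notin\mathtt{NF}_\to$; $\mathsf{Aggr}_{a_v\to B}[$weights of the children in order$]$ with $B=[a_w\mid w\in vE]$ otherwise; $[\![\mathfrak{T}]\!]$ is the weight at the root. $[\![a]\!]=\bigsqcup\{[\![\mathfrak{T}]\!]\mid\mathfrak{T}$ a finite-depth RT with root labeled $a\}$. The wARS is bounded if $[\![a]\!]\neq\top$ for all $a\in A$. *)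

theory Defs
  imports Main "HOL-Library.Extended_Nat"
begin

definition semiring :: "('s \<Rightarrow> 's \<Rightarrow> 's) \<Rightarrow> ('s \<Rightarrow> 's \<Rightarrow> 's) \<Rightarrow> 's \<Rightarrow> 's \<Rightarrow> bool" where
  "semiring pl tm e0 e1 \<longleftrightarrow>
     (\<forall>x y z. pl (pl x y) z = pl x (pl y z)) \<and> (\<forall>x y. pl x y = pl y x) \<and> (\<forall>x. pl e0 x = x) \<and>
     (\<forall>x y z. tm (tm x y) z = tm x (tm y z)) \<and> (\<forall>x. tm e1 x = x \<and> tm x e1 = x) \<and>
     (\<forall>x y z. tm x (pl y z) = pl (tm x y) (tm x z)) \<and>
     (\<forall>x y z. tm (pl y z) x = pl (tm y x) (tm z x)) \<and>
     (\<forall>x. tm e0 x = e0 \<and> tm x e0 = e0)"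

definition nat_le :: "('s \<Rightarrow> 's \<Rightarrow> 's) \<Rightarrow> 's \<Rightarrow> 's \<Rightarrow> bool" where
  "nat_le pl s t \<longleftrightarrow> (\<exists>u. pl s u = t)"

definition is_lub :: "('s \<Rightarrow> 's \<Rightarrow> 's) \<Rightarrow> 's set \<Rightarrow> 's \<Rightarrow> bool" where
  "is_lub pl T x \<longleftrightarrow> (\<forall>t\<in>T. nat_le pl t x) \<and> (\<forall>y. (\<forall>t\<in>T. nat_le pl t y) \<longrightarrow> nat_le pl x y)"

definition Lub :: "('s \<Rightarrow> 's \<Rightarrow> 's) \<Rightarrow> 's set \<Rightarrow> 's" where
  "Lub pl T = (THE x. is_lub pl T x)"

definition stop :: "('s \<Rightarrow> 's \<Rightarrow> 's) \<Rightarrow> 's" where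
  "stop pl = Lub pl UNIV"

definition complete_lattice_semiring :: "('s \<Rightarrow> 's \<Rightarrow> 's) \<Rightarrow> ('s \<Rightarrow> 's \<Rightarrow> 's) \<Rightarrow> 's \<Rightarrow> 's \<Rightarrow> bool" where
  "complete_lattice_semiring pl tm e0 e1 \<longleftrightarrow> semiring pl tm e0 e1 \<and>
     (\<forall>s t. nat_le pl s t \<and> nat_le pl t s \<longrightarrow> s = t) \<and>
     (\<forall>T. \<exists>x. is_lub pl T x)"

definition extremal_fun2 :: "('s \<Rightarrow> 's \<Rightarrow> 's) \<Rightarrow> ('s \<Rightarrow> 's \<Rightarrow> 's) \<Rightarrow> bool" where
  "extremal_fun2 pl f \<longleftrightarrow> (\<forall>x y. x \<noteq> stop pl \<and> y \<noteq> stop pl \<longrightarrow> f x y \<noteq> stop pl)"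

definition extremal_semiring :: "('s \<Rightarrow> 's \<Rightarrow> 's) \<Rightarrow> ('s \<Rightarrow> 's \<Rightarrow> 's) \<Rightarrow> bool" where
  "extremal_semiring pl tm \<longleftrightarrow> extremal_fun2 pl pl \<and> extremal_fun2 pl tm"

datatype 'a seq = FinS "'a list" | InfS "nat \<Rightarrow> 'a"

fun seq_len :: "'a seq \<Rightarrow> enat" where
  "seq_len (FinS xs) = enat (length xs)"
| "seq_len (InfS f) = \<infinity>"

fun seq_nonempty :: "'a seq \<Rightarrow> bool" where
  "seq_nonempty (FinS xs) = (xs \<noteq> [])"
| "seq_nonempty (InfS f) = True"

fun seq_finite :: "'a seq \<Rightarrow> bool" where
  "seq_finite (FinS xs) = True"
| "seq_finite (InfS f) = False"

fun seq_sum :: "('s \<Rightarrow> 's \<Rightarrow> 's) \<Rightarrow> 's \<Rightarrow> 's seq \<Rightarrow> 's" where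
  "seq_sum pl e0 (FinS xs) = foldr pl xs e0"
| "seq_sum pl e0 (InfS f) = Lub pl {foldr pl (map f [0..<n]) e0 | n. n \<ge> 1}"

fun seq_prod :: "('s \<Rightarrow> 's \<Rightarrow> 's) \<Rightarrow> ('s \<Rightarrow> 's \<Rightarrow> 's) \<Rightarrow> 's \<Rightarrow> 's seq \<Rightarrow> 's" where
  "seq_prod pl tm e1 (FinS xs) = foldr tm xs e1"
| "seq_prod pl tm e1 (InfS f) = Lub pl {foldr tm (map f [0..<n]) e1 | n. n \<ge> 1}"

text \<open>Var i denotes the variable v_i (indices start at 1).\<close>
datatype 's aggr = AConst 's | AVar nat | APlus "'s aggr seq" | ATimes "'s aggr seq"

primrec aggr_wf :: "'s aggr \<Rightarrow> bool" where
  "aggr_wf (AConst s) = True"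
| "aggr_wf (AVar i) = True"
| "aggr_wf (APlus F) = (seq_nonempty F \<and> (\<forall>b\<in>set_seq (map_seq aggr_wf F). b))"
| "aggr_wf (ATimes F) = (seq_nonempty F \<and> (\<forall>b\<in>set_seq (map_seq aggr_wf F). b))"

primrec aggr_finite :: "'s aggr \<Rightarrow> bool" where
  "aggr_finite (AConst s) = True"
| "aggr_finite (AVar i) = True"
| "aggr_finite (APlus F) = (seq_finite F \<and> (\<forall>b\<in>set_seq (map_seq aggr_finite F). b))"
| "aggr_finite (ATimes F) = (seq_finite F \<and> (\<forall>b\<in>set_seq (map_seq aggr_finite F). b))"

primrec aggr_vars :: "'s aggr \<Rightarrow> nat set" where
  "aggr_vars (AConst s) = {}"
| "aggr_vars (AVar i) = {i}"
| "aggr_vars (APlus F) = \<Union> (set_seq (map_seq aggr_vars F))"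
| "aggr_vars (ATimes F) = \<Union> (set_seq (map_seq aggr_vars F))"

primrec aggr_consts :: "'s aggr \<Rightarrow> 's set" where
  "aggr_consts (AConst s) = {s}"
| "aggr_consts (AVar i) = {}"
| "aggr_consts (APlus F) = \<Union> (set_seq (map_seq aggr_consts F))"
| "aggr_consts (ATimes F) = \<Union> (set_seq (map_seq aggr_consts F))"

primrec aggr_eval :: "('s \<Rightarrow> 's \<Rightarrow> 's) \<Rightarrow> ('s \<Rightarrow> 's \<Rightarrow> 's) \<Rightarrow> 's \<Rightarrow> 's \<Rightarrow> (nat \<Rightarrow> 's) \<Rightarrow> 's aggr \<Rightarrow> 's" where
  "aggr_eval pl tm e0 e1 env (AConst s) = s"
| "aggr_eval pl tm e0 e1 env (AVar i) = env i"
| "aggr_eval pl tm e0 e1 env (APlus F) = seq_sum pl e0 (map_seq (aggr_eval pl tm e0 e1 env) F)"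
| "aggr_eval pl tm e0 e1 env (ATimes F) = seq_prod pl tm e1 (map_seq (aggr_eval pl tm e0 e1 env) F)"

definition NF :: "('a \<Rightarrow> 'a seq \<Rightarrow> bool) \<Rightarrow> 'a set" where
  "NF rel = {a. \<not> (\<exists>B. rel a B)}"

definition sARS :: "('a \<Rightarrow> 'a seq \<Rightarrow> bool) \<Rightarrow> bool" where
  "sARS rel \<longleftrightarrow> (\<forall>a B. rel a B \<longrightarrow> seq_nonempty B)"

definition finitely_nondeterministic :: "('a \<Rightarrow> 'a seq \<Rightarrow> bool) \<Rightarrow> bool" where
  "finitely_nondeterministic rel \<longleftrightarrow> (\<forall>a. finite {B. rel a B})"

definition finitely_branching :: "('a \<Rightarrow> 'a seq \<Rightarrow> bool) \<Rightarrow> bool" where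
  "finitely_branching rel \<longleftrightarrow> (\<forall>a B. rel a B \<longrightarrow> seq_finite B)"

text \<open>A labeled ordered tree (possibly infinite depth / branching) is given by a set D of
  node addresses (lists of child positions, starting at 0) and a labeling lab.\<close>
definition is_tree :: "nat list set \<Rightarrow> bool" where
  "is_tree D \<longleftrightarrow> [] \<in> D \<and> (\<forall>v i. v @ [i] \<in> D \<longrightarrow> v \<in> D) \<and>
     (\<forall>v i. v @ [Suc i] \<in> D \<longrightarrow> v @ [i] \<in> D)"

definition children_seq :: "nat list set \<Rightarrow> (nat list \<Rightarrow> 'a) \<Rightarrow> nat list \<Rightarrow> 'a seq" where
  "children_seq D lab v =
     (if finite {i. v @ [i] \<in> D}
      then FinS (map (\<lambda>i. lab (v @ [i])) [0..<card {i. v @ [i] \<in> D}])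
      else InfS (\<lambda>i. lab (v @ [i])))"

definition is_leaf :: "nat list set \<Rightarrow> nat list \<Rightarrow> bool" where
  "is_leaf D v \<longleftrightarrow> (\<forall>i. v @ [i] \<notin> D)"

definition is_RT :: "('a \<Rightarrow> 'a seq \<Rightarrow> bool) \<Rightarrow> nat list set \<Rightarrow> (nat list \<Rightarrow> 'a) \<Rightarrow> bool" where
  "is_RT rel D lab \<longleftrightarrow> is_tree D \<and>
     (\<forall>v\<in>D. is_leaf D v \<or> rel (lab v) (children_seq D lab v))"

definition finite_depth :: "nat list set \<Rightarrow> bool" where
  "finite_depth D \<longleftrightarrow> (\<exists>n. \<forall>v\<in>D. length v \<le> n)"

definition terminating :: "('a \<Rightarrow> 'a seq \<Rightarrow> bool) \<Rightarrow> bool" where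
  "terminating rel \<longleftrightarrow> (\<forall>D lab. is_RT rel D lab \<longrightarrow> finite_depth D)"

definition depth :: "nat list set \<Rightarrow> nat" where
  "depth D = (LEAST n. \<forall>v\<in>D. length v \<le> n)"

definition wARS :: "('a \<Rightarrow> 'a seq \<Rightarrow> bool) \<Rightarrow> ('s \<Rightarrow> 's \<Rightarrow> 's) \<Rightarrow> ('s \<Rightarrow> 's \<Rightarrow> 's) \<Rightarrow> 's \<Rightarrow> 's
     \<Rightarrow> ('a \<Rightarrow> 's) \<Rightarrow> ('a \<Rightarrow> 'a seq \<Rightarrow> 's aggr) \<Rightarrow> bool" where
  "wARS rel pl tm e0 e1 fNF Aggr \<longleftrightarrow> sARS rel \<and> complete_lattice_semiring pl tm e0 e1 \<and>
     (\<forall>a B. rel a B \<longrightarrow> aggr_wf (Aggr a B) \<and>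
        (\<forall>i\<in>aggr_vars (Aggr a B). 1 \<le> i \<and> enat i \<le> seq_len B))"

text \<open>Weight at node v, computed with k levels of remaining height (correct once k bounds
  the height of the subtree below v).\<close>
fun node_weight :: "('a \<Rightarrow> 'a seq \<Rightarrow> bool) \<Rightarrow> ('s \<Rightarrow> 's \<Rightarrow> 's) \<Rightarrow> ('s \<Rightarrow> 's \<Rightarrow> 's) \<Rightarrow> 's \<Rightarrow> 's
     \<Rightarrow> ('a \<Rightarrow> 's) \<Rightarrow> ('a \<Rightarrow> 'a seq \<Rightarrow> 's aggr) \<Rightarrow> nat list set \<Rightarrow> (nat list \<Rightarrow> 'a)
     \<Rightarrow> nat \<Rightarrow> nat list \<Rightarrow> 's" where
  "node_weight rel pl tm e0 e1 fNF Aggr D lab k v =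
     (if lab v \<in> NF rel then fNF (lab v)
      else if is_leaf D v then e0
      else (case k of 0 \<Rightarrow> e0
            | Suc k' \<Rightarrow> aggr_eval pl tm e0 e1
                (\<lambda>i. node_weight rel pl tm e0 e1 fNF Aggr D lab k' (v @ [i - 1]))
                (Aggr (lab v) (children_seq D lab v))))"

definition tree_weight :: "('a \<Rightarrow> 'a seq \<Rightarrow> bool) \<Rightarrow> ('s \<Rightarrow> 's \<Rightarrow> 's) \<Rightarrow> ('s \<Rightarrow> 's \<Rightarrow> 's) \<Rightarrow> 's \<Rightarrow> 's
     \<Rightarrow> ('a \<Rightarrow> 's) \<Rightarrow> ('a \<Rightarrow> 'a seq \<Rightarrow> 's aggr) \<Rightarrow> nat list set \<Rightarrow> (nat list \<Rightarrow> 'a) \<Rightarrow> 's" where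
  "tree_weight rel pl tm e0 e1 fNF Aggr D lab = node_weight rel pl tm e0 e1 fNF Aggr D lab (depth D) []"

definition weight :: "('a \<Rightarrow> 'a seq \<Rightarrow> bool) \<Rightarrow> ('s \<Rightarrow> 's \<Rightarrow> 's) \<Rightarrow> ('s \<Rightarrow> 's \<Rightarrow> 's) \<Rightarrow> 's \<Rightarrow> 's
     \<Rightarrow> ('a \<Rightarrow> 's) \<Rightarrow> ('a \<Rightarrow> 'a seq \<Rightarrow> 's aggr) \<Rightarrow> 'a \<Rightarrow> 's" where
  "weight rel pl tm e0 e1 fNF Aggr a = Lub pl
     {tree_weight rel pl tm e0 e1 fNF Aggr D lab | D lab.
        is_RT rel D lab \<and> finite_depth D \<and> lab [] = a}"

definition bounded :: "('a \<Rightarrow> 'a seq \<Rightarrow> bool) \<Rightarrow> ('s \<Rightarrow> 's \<Rightarrow> 's) \<Rightarrow> ('s \<Rightarrow> 's \<Rightarrow> 's) \<Rightarrow> 's \<Rightarrow> 's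
     \<Rightarrow> ('a \<Rightarrow> 's) \<Rightarrow> ('a \<Rightarrow> 'a seq \<Rightarrow> 's aggr) \<Rightarrow> bool" where
  "bounded rel pl tm e0 e1 fNF Aggr \<longleftrightarrow> (\<forall>a. weight rel pl tm e0 e1 fNF Aggr a \<noteq> stop pl)"

end

theory Submission
  imports Defs
begin

(*
  Termination and finite branching make the relation "b occurs in a successor sequence of a"
  well-founded, since an infinite descending chain would unfold into a reduction tree of
  infinite depth.  By well-founded induction every a then gets a bound u_a \<noteq> \<top> on the weight
  of every node labelled a: fNF a for a normal form, otherwise the sum over the finitely many
  a \<rightarrow> B of Aggr_{a \<rightarrow> B} applied to the bounds of the children.  It is an upper bound because
  aggregators are monotone in the natural order, and it is not \<top> by the extremal property,
  as the aggregators are finite and avoid \<top>.  Non-normal-form leaves weigh 0, and 0 \<noteq> \<top>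
  because 0 lies below fNF of a normal form, which exists by well-foundedness.
*)

locale cl_semiring =
  fixes pl tm :: "'s \<Rightarrow> 's \<Rightarrow> 's" and e0 e1 :: 's
  assumes complete_lattice_semiring: "complete_lattice_semiring pl tm e0 e1"
begin

abbreviation natural_le :: "'s \<Rightarrow> 's \<Rightarrow> bool" (infix "\<preceq>" 50)
  where "x \<preceq> y \<equiv> nat_le pl x y"

lemma semiring: "semiring pl tm e0 e1"
  using complete_lattice_semiring by (simp add: complete_lattice_semiring_def)

lemma nat_le_refl: "x \<preceq> x"
  using semiring unfolding semiring_def nat_le_def by metis

lemma nat_le_trans: "x \<preceq> y \<Longrightarrow> y \<preceq> z \<Longrightarrow> x \<preceq> z"
  using semiring unfolding semiring_def nat_le_def by metis

lemma nat_le_antisym: "x \<preceq> y \<Longrightarrow> y \<preceq> x \<Longrightarrow> x = y"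
  using complete_lattice_semiring by (auto simp: complete_lattice_semiring_def)

lemma zero_nat_le: "e0 \<preceq> x"
  using semiring unfolding semiring_def nat_le_def by metis

lemma nat_le_plus_left: "x \<preceq> pl x y"
  by (auto simp: nat_le_def)

lemma nat_le_plus_right: "y \<preceq> pl x y"
  using semiring unfolding semiring_def nat_le_def by metis

lemma plus_mono: "x \<preceq> x' \<Longrightarrow> y \<preceq> y' \<Longrightarrow> pl x y \<preceq> pl x' y'"
  using semiring unfolding semiring_def nat_le_def by metis

lemma times_mono:
  assumes "x \<preceq> x'" "y \<preceq> y'"
  shows "tm x y \<preceq> tm x' y'"
proof -
  obtain u w where "x' = pl x u" "y' = pl y w"
    using assms unfolding nat_le_def by metis
  then have "tm x' y' = pl (tm x y) (pl (tm x w) (pl (tm u y) (tm u w)))"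
    using semiring unfolding semiring_def by metis
  then show ?thesis by (auto simp: nat_le_def)
qed

lemma is_lub_Lub: "is_lub pl T (Lub pl T)"
proof -
  obtain x where x: "is_lub pl T x"
    using complete_lattice_semiring unfolding complete_lattice_semiring_def by blast
  have "y = x" if "is_lub pl T y" for y
    using x that nat_le_antisym unfolding is_lub_def by blast
  with x show ?thesis unfolding Lub_def by (rule theI)
qed

lemma nat_le_Lub: "t \<in> T \<Longrightarrow> t \<preceq> Lub pl T"
  using is_lub_Lub unfolding is_lub_def by blast

lemma Lub_least: "(\<And>t. t \<in> T \<Longrightarrow> t \<preceq> u) \<Longrightarrow> Lub pl T \<preceq> u"
  using is_lub_Lub unfolding is_lub_def by blast

lemma Lub_mono_pointwise:
  assumes "\<And>n. P n \<Longrightarrow> s n \<preceq> s' n"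
  shows "Lub pl {s n | n. P n} \<preceq> Lub pl {s' n | n. P n}"
  by (rule Lub_least) (auto intro: nat_le_trans[OF assms nat_le_Lub])

lemma nat_le_stop: "x \<preceq> stop pl"
  unfolding stop_def by (rule nat_le_Lub) simp

lemma nat_le_not_stop: "x \<preceq> y \<Longrightarrow> y \<noteq> stop pl \<Longrightarrow> x \<noteq> stop pl"
  using nat_le_antisym nat_le_stop by blast

lemma member_le_foldr_plus: "x \<in> set xs \<Longrightarrow> h x \<preceq> foldr pl (map h xs) e0"
  by (induction xs) (auto intro: nat_le_plus_left nat_le_trans[OF _ nat_le_plus_right])

lemma foldr_plus_mono:
  "(\<And>x. x \<in> set xs \<Longrightarrow> g x \<preceq> h x) \<Longrightarrow> foldr pl (map g xs) e0 \<preceq> foldr pl (map h xs) e0"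
  by (induction xs) (auto intro: plus_mono nat_le_refl)

lemma foldr_times_mono:
  "(\<And>x. x \<in> set xs \<Longrightarrow> g x \<preceq> h x) \<Longrightarrow> foldr tm (map g xs) e1 \<preceq> foldr tm (map h xs) e1"
  by (induction xs) (auto intro: times_mono nat_le_refl)

lemma aggr_eval_mono:
  "(\<And>i. i \<in> aggr_vars a \<Longrightarrow> env i \<preceq> env' i) \<Longrightarrow>
    aggr_eval pl tm e0 e1 env a \<preceq> aggr_eval pl tm e0 e1 env' a"
proof (induction a)
  case (AConst s)
  then show ?case by (simp add: nat_le_refl)
next
  case (AVar i)
  then show ?case by simp
next
  case (APlus F)
  then show ?case
    by (cases F) (fastforce intro!: foldr_plus_mono Lub_mono_pointwise simp del: upt_Suc)+
next
  case (ATimes F)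
  then show ?case
    by (cases F) (fastforce intro!: foldr_times_mono Lub_mono_pointwise simp del: upt_Suc)+
qed

lemma foldr_plus_not_stop:
  assumes "extremal_semiring pl tm" "e0 \<noteq> stop pl" "\<And>x. x \<in> set xs \<Longrightarrow> x \<noteq> stop pl"
  shows "foldr pl xs e0 \<noteq> stop pl"
  using assms unfolding extremal_semiring_def extremal_fun2_def by (induction xs) auto

lemma foldr_times_not_stop:
  assumes "extremal_semiring pl tm" "xs \<noteq> []" "\<And>x. x \<in> set xs \<Longrightarrow> x \<noteq> stop pl"
  shows "foldr tm xs e1 \<noteq> stop pl"
  using assms(2,3)
proof (induction xs rule: list_nonempty_induct)
  case (single x)
  then show ?case using semiring by (simp add: semiring_def)
next
  case (cons x xs)
  then show ?case using assms(1) by (auto simp: extremal_semiring_def extremal_fun2_def)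
qed

(* aggr_wf matters for products: the empty product e1 may be \<top>. *)
lemma aggr_eval_not_stop:
  assumes "extremal_semiring pl tm" "e0 \<noteq> stop pl"
  shows "aggr_finite a \<Longrightarrow> aggr_wf a \<Longrightarrow> stop pl \<notin> aggr_consts a \<Longrightarrow>
    (\<And>i. i \<in> aggr_vars a \<Longrightarrow> env i \<noteq> stop pl) \<Longrightarrow> aggr_eval pl tm e0 e1 env a \<noteq> stop pl"
proof (induction a)
  case (AConst s)
  then show ?case by simp
next
  case (AVar i)
  then show ?case by simp
next
  case (APlus F)
  then obtain xs where F: "F = FinS xs" by (cases F) auto
  have args: "aggr_eval pl tm e0 e1 env x \<noteq> stop pl" if "x \<in> set xs" for x
    using that F APlus.prems by (intro APlus.IH) auto
  show ?case
    unfolding F by (simp, rule foldr_plus_not_stop[OF assms]) (auto dest: args)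
next
  case (ATimes F)
  then obtain xs where F: "F = FinS xs" by (cases F) auto
  have args: "aggr_eval pl tm e0 e1 env x \<noteq> stop pl" if "x \<in> set xs" for x
    using that F ATimes.prems by (intro ATimes.IH) auto
  moreover have "xs \<noteq> []"
    using ATimes.prems F by simp
  ultimately show ?case
    unfolding F by (simp, intro foldr_times_not_stop[OF assms(1)]) auto
qed

end

definition child_rel :: "('a \<Rightarrow> 'a seq \<Rightarrow> bool) \<Rightarrow> 'a rel" where
  "child_rel rel = {(b, a). \<exists>B. rel a B \<and> b \<in> set_seq B}"

(*
  An infinite descending chain f 0, f 1, ... of the child relation, where f (Suc n) sits at
  position P n of the successor sequence X n of f n.  It unfolds into a reduction tree of
  infinite depth whose spine follows the chain and whose other nodes are leaves.
*)
locale reduction_chain =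
  fixes rel :: "'a \<Rightarrow> 'a seq \<Rightarrow> bool" and f :: "nat \<Rightarrow> 'a"
    and X :: "nat \<Rightarrow> 'a list" and P :: "nat \<Rightarrow> nat"
  assumes step: "rel (f n) (FinS (X n))"
    and position: "P n < length (X n)"
    and next_elem: "X n ! P n = f (Suc n)"
begin

definition spine :: "nat \<Rightarrow> nat list" where
  "spine m = map P [0..<m]"

definition nodes :: "nat list set" where
  "nodes = insert [] {spine m @ [i] | m i. i < length (X m)}"

definition label :: "nat list \<Rightarrow> 'a" where
  "label w = (if w = [] then f 0 else X (length w - 1) ! last w)"

lemma spine_Suc: "spine (Suc m) = spine m @ [P m]"
  by (simp add: spine_def)

lemma spine_0 [simp]: "spine 0 = []"
  by (simp add: spine_def)

lemma length_spine [simp]: "length (spine m) = m"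
  by (simp add: spine_def)

lemma Nil_in_nodes: "[] \<in> nodes"
  by (simp add: nodes_def)

lemma spine_snoc_in_nodes_iff: "spine m @ [i] \<in> nodes \<longleftrightarrow> i < length (X m)"
proof
  assume "spine m @ [i] \<in> nodes"
  then obtain m' i' where eq: "spine m @ [i] = spine m' @ [i']" and "i' < length (X m')"
    unfolding nodes_def by blast
  moreover have "m' = m"
    using arg_cong[OF eq, of length] by simp
  ultimately show "i < length (X m)" by simp
qed (auto simp: nodes_def)

lemma spine_in_nodes: "spine m \<in> nodes"
  by (cases m) (simp_all add: Nil_in_nodes spine_Suc spine_snoc_in_nodes_iff position)

lemma label_spine: "label (spine m) = f m"
  by (cases m) (simp_all add: label_def spine_Suc next_elem)

lemma label_spine_snoc: "label (spine m @ [i]) = X m ! i"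
  by (simp add: label_def)

lemma snoc_in_nodes_imp_spine:
  assumes "v @ [i] \<in> nodes"
  shows "v = spine (length v)"
  using assms by (auto simp: nodes_def)

lemma nodes_cases:
  assumes "v \<in> nodes"
  obtains m where "v = spine m" | "is_leaf nodes v"
proof (cases "v = []")
  case True
  then show ?thesis using that(1)[of 0] by simp
next
  case False
  then obtain m i where v: "v = spine m @ [i]"
    using assms unfolding nodes_def by blast
  show ?thesis
  proof (cases "i = P m")
    case True
    then show ?thesis using that(1)[of "Suc m"] v by (simp add: spine_Suc)
  next
    case False
    have "v @ [j] \<notin> nodes" for j
    proof
      assume "v @ [j] \<in> nodes"
      then have "v = spine (Suc m)"
        using snoc_in_nodes_imp_spine v by fastforce
      with v False show False by (simp add: spine_Suc)
    qed
    then show ?thesis using that(2) by (simp add: is_leaf_def)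
  qed
qed

lemma children_seq_spine: "children_seq nodes label (spine m) = FinS (X m)"
proof -
  have "{i. spine m @ [i] \<in> nodes} = {..<length (X m)}"
    by (auto simp: spine_snoc_in_nodes_iff)
  then show ?thesis
    by (simp add: children_seq_def label_spine_snoc map_nth)
qed

lemma is_tree_nodes: "is_tree nodes"
  unfolding is_tree_def
proof (intro conjI allI impI)
  show "[] \<in> nodes" by (rule Nil_in_nodes)
next
  fix v i
  assume "v @ [i] \<in> nodes"
  then show "v \<in> nodes"
    using snoc_in_nodes_imp_spine spine_in_nodes by metis
next
  fix v i
  assume "v @ [Suc i] \<in> nodes"
  then show "v @ [i] \<in> nodes"
    using snoc_in_nodes_imp_spine spine_snoc_in_nodes_iff by (metis Suc_lessD)
qed

lemma is_RT_nodes: "is_RT rel nodes label"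
  unfolding is_RT_def
proof (intro conjI is_tree_nodes ballI)
  fix v
  assume "v \<in> nodes"
  then show "is_leaf nodes v \<or> rel (label v) (children_seq nodes label v)"
    by (cases rule: nodes_cases) (auto simp: children_seq_spine label_spine step)
qed

lemma infinite_depth_nodes: "\<not> finite_depth nodes"
  unfolding finite_depth_def by (metis spine_in_nodes length_spine not_less_eq_eq order_refl)

end

lemma wf_child_rel:
  assumes "finitely_branching rel" "terminating rel"
  shows "wf (child_rel rel)"
proof (rule ccontr)
  assume "\<not> wf (child_rel rel)"
  then obtain f where chain: "(f (Suc n), f n) \<in> child_rel rel" for n
    unfolding wf_iff_no_infinite_down_chain by blast
  have "\<exists>xs p. rel (f n) (FinS xs) \<and> p < length xs \<and> xs ! p = f (Suc n)" for n
  proof -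
    obtain B where B: "rel (f n) B" "f (Suc n) \<in> set_seq B"
      using chain[of n] unfolding child_rel_def by blast
    moreover obtain xs where "B = FinS xs"
      using assms(1) B(1) unfolding finitely_branching_def by (cases B) force+
    ultimately show ?thesis by (auto simp: in_set_conv_nth)
  qed
  then obtain X P where "rel (f n) (FinS (X n))" "P n < length (X n)" "X n ! P n = f (Suc n)" for n
    by metis
  then interpret reduction_chain rel f X P
    by unfold_locales
  show False
    using assms(2) is_RT_nodes infinite_depth_nodes unfolding terminating_def by blast
qed

definition seq_nth :: "'a seq \<Rightarrow> nat \<Rightarrow> 'a" where
  "seq_nth B j = (case B of FinS xs \<Rightarrow> xs ! j | InfS f \<Rightarrow> f j)"

lemma seq_nth_in_set_seq: "enat (Suc j) \<le> seq_len B \<Longrightarrow> seq_nth B j \<in> set_seq B"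
  by (cases B) (auto simp: seq_nth_def)

lemma seq_nth_children_seq:
  "enat (Suc j) \<le> seq_len (children_seq D lab v) \<Longrightarrow> seq_nth (children_seq D lab v) j = lab (v @ [j])"
  by (auto simp: children_seq_def seq_nth_def simp del: upt_Suc)

lemma rel_children_seq:
  assumes "is_RT rel D lab" "\<not> is_leaf D v"
  shows "rel (lab v) (children_seq D lab v)"
proof -
  obtain i where "v @ [i] \<in> D"
    using assms(2) unfolding is_leaf_def by blast
  then have "v \<in> D"
    using assms(1) unfolding is_RT_def is_tree_def by blast
  then show ?thesis
    using assms unfolding is_RT_def by blast
qed

declare node_weight.simps [simp del]

locale finitary_wARS =
  fixes rel :: "'a \<Rightarrow> 'a seq \<Rightarrow> bool" and pl tm :: "'s \<Rightarrow> 's \<Rightarrow> 's" and e0 e1 :: 's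
    and fNF :: "'a \<Rightarrow> 's" and Aggr :: "'a \<Rightarrow> 'a seq \<Rightarrow> 's aggr"
  assumes wARS: "wARS rel pl tm e0 e1 fNF Aggr"
    and wf_children: "wf (child_rel rel)"
    and finitely_nondeterministic: "finitely_nondeterministic rel"
    and extremal: "extremal_semiring pl tm"
    and fNF_not_stop: "a \<in> NF rel \<Longrightarrow> fNF a \<noteq> stop pl"
    and Aggr_finite: "rel a B \<Longrightarrow> aggr_finite (Aggr a B)"
    and Aggr_no_stop: "rel a B \<Longrightarrow> stop pl \<notin> aggr_consts (Aggr a B)"
begin

sublocale cl_semiring pl tm e0 e1
  using wARS by unfold_locales (simp add: wARS_def)

abbreviation nw :: "nat list set \<Rightarrow> (nat list \<Rightarrow> 'a) \<Rightarrow> nat \<Rightarrow> nat list \<Rightarrow> 's" where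
  "nw \<equiv> node_weight rel pl tm e0 e1 fNF Aggr"

lemma node_weight_NF: "lab v \<in> NF rel \<Longrightarrow> nw D lab k v = fNF (lab v)"
  by (simp add: node_weight.simps)

lemma node_weight_leaf: "lab v \<notin> NF rel \<Longrightarrow> is_leaf D v \<Longrightarrow> nw D lab k v = e0"
  by (simp add: node_weight.simps)

lemma node_weight_0: "lab v \<notin> NF rel \<Longrightarrow> nw D lab 0 v = e0"
  by (simp add: node_weight.simps)

lemma node_weight_Suc:
  "lab v \<notin> NF rel \<Longrightarrow> \<not> is_leaf D v \<Longrightarrow> nw D lab (Suc k) v =
     aggr_eval pl tm e0 e1 (\<lambda>i. nw D lab k (v @ [i - 1])) (Aggr (lab v) (children_seq D lab v))"
  by (simp add: node_weight.simps)

lemma Aggr_wf: "rel a B \<Longrightarrow> aggr_wf (Aggr a B)"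
  using wARS unfolding wARS_def by blast

lemma Aggr_var_bounds: "rel a B \<Longrightarrow> i \<in> aggr_vars (Aggr a B) \<Longrightarrow> 1 \<le> i \<and> enat i \<le> seq_len B"
  using wARS unfolding wARS_def by blast

lemma seq_nonempty_succ: "rel a B \<Longrightarrow> seq_nonempty B"
  using wARS unfolding wARS_def sARS_def by blast

lemma NF_nonempty: "NF rel \<noteq> {}"
proof -
  obtain a where a: "(b, a) \<notin> child_rel rel" for b
    by (rule wfE_min[OF wf_children UNIV_I]) blast
  have "a \<in> NF rel"
  proof (rule ccontr)
    assume "a \<notin> NF rel"
    then obtain B where B: "rel a B"
      unfolding NF_def by blast
    then obtain b where "b \<in> set_seq B"
      using seq_nonempty_succ by (cases B) fastforce+
    with B a show False
      unfolding child_rel_def by blast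
  qed
  then show ?thesis by blast
qed

lemma zero_not_stop: "e0 \<noteq> stop pl"
  using NF_nonempty fNF_not_stop nat_le_not_stop[OF zero_nat_le] by auto

(* Quantifying over every height budget k avoids reasoning about the depth of trees. *)
definition weight_bound :: "'a \<Rightarrow> 's \<Rightarrow> bool" where
  "weight_bound a u \<longleftrightarrow> u \<noteq> stop pl \<and>
     (\<forall>D lab k v. is_RT rel D lab \<longrightarrow> lab v = a \<longrightarrow> nw D lab k v \<preceq> u)"

lemma weight_bound_NF: "a \<in> NF rel \<Longrightarrow> weight_bound a (fNF a)"
  by (simp add: weight_bound_def fNF_not_stop nat_le_refl node_weight_NF)

lemma node_weight_le_aggr:
  assumes "is_RT rel D lab" "lab v \<notin> NF rel" "\<not> is_leaf D v"
    and "\<And>i. i \<in> aggr_vars (Aggr (lab v) (children_seq D lab v)) \<Longrightarrow>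
      weight_bound (lab (v @ [i - 1])) (env i)"
  shows "nw D lab k v \<preceq> aggr_eval pl tm e0 e1 env (Aggr (lab v) (children_seq D lab v))"
proof (cases k)
  case 0
  then show ?thesis using assms(2) by (simp add: node_weight_0 zero_nat_le)
next
  case (Suc k')
  have "nw D lab k' (v @ [i - 1]) \<preceq> env i" if "i \<in> aggr_vars (Aggr (lab v) (children_seq D lab v))" for i
    using assms(1) assms(4)[OF that] unfolding weight_bound_def by blast
  then show ?thesis
    unfolding Suc node_weight_Suc[of lab v D, OF assms(2,3)] by (rule aggr_eval_mono)
qed

lemma seq_nth_var_child:
  assumes "rel a B" "i \<in> aggr_vars (Aggr a B)"
  shows "(seq_nth B (i - 1), a) \<in> child_rel rel"
proof -
  have "enat (Suc (i - 1)) \<le> seq_len B"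
    using Aggr_var_bounds[OF assms] by simp
  then show ?thesis
    using assms(1) seq_nth_in_set_seq unfolding child_rel_def by blast
qed

definition aggr_of_bounds :: "('a \<Rightarrow> 's) \<Rightarrow> 'a \<Rightarrow> 'a seq \<Rightarrow> 's" where
  "aggr_of_bounds g a B = aggr_eval pl tm e0 e1 (\<lambda>i. g (seq_nth B (i - 1))) (Aggr a B)"

lemma aggr_of_bounds_not_stop:
  assumes "rel a B" "\<And>b. (b, a) \<in> child_rel rel \<Longrightarrow> weight_bound b (g b)"
  shows "aggr_of_bounds g a B \<noteq> stop pl"
proof -
  have "g (seq_nth B (i - 1)) \<noteq> stop pl" if "i \<in> aggr_vars (Aggr a B)" for i
    using assms(2)[OF seq_nth_var_child[OF assms(1) that]] unfolding weight_bound_def by blast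
  then show ?thesis
    unfolding aggr_of_bounds_def using assms(1)
    by (intro aggr_eval_not_stop extremal zero_not_stop Aggr_finite Aggr_wf Aggr_no_stop)
qed

lemma node_weight_le_aggr_of_bounds:
  assumes "is_RT rel D lab" "lab v = a" "a \<notin> NF rel" "\<not> is_leaf D v"
    and "\<And>b. (b, a) \<in> child_rel rel \<Longrightarrow> weight_bound b (g b)"
  shows "nw D lab k v \<preceq> aggr_of_bounds g a (children_seq D lab v)"
proof -
  let ?B = "children_seq D lab v"
  have rel: "rel a ?B"
    using rel_children_seq assms(1,2,4) by blast
  show ?thesis
    unfolding aggr_of_bounds_def
  proof (rule node_weight_le_aggr[OF assms(1) _ assms(4), unfolded assms(2)])
    show "a \<notin> NF rel" by (rule assms(3))
    fix i
    assume i: "i \<in> aggr_vars (Aggr a ?B)"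
    then have "seq_nth ?B (i - 1) = lab (v @ [i - 1])"
      using Aggr_var_bounds[OF rel i] by (intro seq_nth_children_seq) simp
    then show "weight_bound (lab (v @ [i - 1])) (g (seq_nth ?B (i - 1)))"
      using assms(5)[OF seq_nth_var_child[OF rel i]] by simp
  qed
qed

lemma weight_bound_step:
  assumes "a \<notin> NF rel" "\<And>b. (b, a) \<in> child_rel rel \<Longrightarrow> weight_bound b (g b)"
  shows "\<exists>u. weight_bound a u"
proof -
  obtain Bs where Bs: "set Bs = {B. rel a B}"
    using finitely_nondeterministic finite_list unfolding finitely_nondeterministic_def by blast
  define u where "u = foldr pl (map (aggr_of_bounds g a) Bs) e0"
  have "weight_bound a u"
    unfolding weight_bound_def
  proof (intro conjI allI impI)
    show "u \<noteq> stop pl"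
      unfolding u_def using Bs aggr_of_bounds_not_stop[OF _ assms(2)]
      by (intro foldr_plus_not_stop extremal zero_not_stop) auto
    fix D lab k v
    assume RT: "is_RT rel D lab" and "lab v = a"
    show "nw D lab k v \<preceq> u"
    proof (cases "is_leaf D v")
      case True
      then show ?thesis
        using assms(1) \<open>lab v = a\<close> by (simp add: node_weight_leaf zero_nat_le)
    next
      case False
      then have "children_seq D lab v \<in> set Bs"
        using Bs RT rel_children_seq \<open>lab v = a\<close> by blast
      then have "aggr_of_bounds g a (children_seq D lab v) \<preceq> u"
        unfolding u_def by (rule member_le_foldr_plus)
      moreover have "nw D lab k v \<preceq> aggr_of_bounds g a (children_seq D lab v)"
        using RT \<open>lab v = a\<close> assms(1) False assms(2) by (rule node_weight_le_aggr_of_bounds)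
      ultimately show ?thesis
        by (blast intro: nat_le_trans)
    qed
  qed
  then show ?thesis ..
qed

lemma weight_bound_exists: "\<exists>u. weight_bound a u"
  using wf_children
proof (induction a rule: wf_induct_rule)
  case (less a)
  show ?case
  proof (cases "a \<in> NF rel")
    case True
    then show ?thesis using weight_bound_NF by blast
  next
    case False
    then show ?thesis
      using less
      by (intro weight_bound_step[where g = "\<lambda>b. SOME u. weight_bound b u"]) (auto intro: someI_ex)
  qed
qed

lemma weight_not_stop: "weight rel pl tm e0 e1 fNF Aggr a \<noteq> stop pl"
proof -
  obtain u where u: "weight_bound a u"
    using weight_bound_exists by blast
  have "weight rel pl tm e0 e1 fNF Aggr a \<preceq> u"
    unfolding weight_def tree_weight_def using u
    by (intro Lub_least) (auto simp: weight_bound_def)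
  with u show ?thesis
    unfolding weight_bound_def using nat_le_not_stop by blast
qed

end

theorem theorem29:
  fixes rel :: "'a \<Rightarrow> 'a seq \<Rightarrow> bool"
    and pl tm :: "'s \<Rightarrow> 's \<Rightarrow> 's" and e0 e1 :: 's
    and fNF :: "'a \<Rightarrow> 's" and Aggr :: "'a \<Rightarrow> 'a seq \<Rightarrow> 's aggr"
  assumes "wARS rel pl tm e0 e1 fNF Aggr"
    and "terminating rel" and "finitely_nondeterministic rel" and "finitely_branching rel"
    and "extremal_semiring pl tm"
    and "\<forall>a\<in>NF rel. fNF a \<noteq> stop pl"
    and "\<forall>a B. rel a B \<longrightarrow> aggr_finite (Aggr a B) \<and> stop pl \<notin> aggr_consts (Aggr a B)"
  shows "bounded rel pl tm e0 e1 fNF Aggr"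
proof -
  interpret finitary_wARS rel pl tm e0 e1 fNF Aggr
    using assms wf_child_rel[OF assms(4,2)] by unfold_locales blast+
  show ?thesis
    unfolding bounded_def using weight_not_stop by blast
qed

end
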